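(* Consider the randomized matching algorithm on the helper graph $\mathcal{H}_i$ described in the context, executed in the V-CONGEST model on $G$ where each real node $x$ simulates all copies $x_{\mathcal{C}}$ in $\mathcal{H}_i$ of its type-1 and type-2 virtual nodes on layer $l$. In each round of this matching algorithm, each real edge of $G$ is used to transmit at most twice in each direction; consequently each round of the matching algorithm can be carried out in $O(\Delta)$ time slots.
   Context: $G=(V,E)$ is a finite undirected graph with maximum degree $\Delta$. Fix an integer $L$. The virtual graph $\mathcal{G}$ contains $3L$ copies of each $v\in V$: each lower layer $1,\dots,L$ contains one copy of every node; each upper layer $L+1,\dots,2L$ contains a type-1 copy and a type-2 copy of every node. Every copy of $v$ is adjacent to all other copies of $v$ and to all copies of each neighbor of $v$ in $G$. $\Psi$ maps virtual nodes to real nodes. There are classes $1,\dots,t$. For a fixed upper layer $l$, nodes of layers $1,\dots,l-1$ are old nodes, each assigned a class; a component of class $i$ is a connected component of the subgraph induced by old nodes of class $i$. The helper graph $\mathcal{H}_i[\mathcal{C}]$: for each type-2 node $v$ of layer $l$, a node $v_{\mathcal{C}}$ is added iff $\Psi(v)\notin\Psi(\mathcal{C})$, $v$ has a neighbor in $\mathcal{C}$, and $v$ has no neighbor in another component of class $i$; for each such $v_{\mathcal{C}}$ and each type-1 neighbor $w$ of $v$ on layer $l$ that has a neighbor in some component $\mathcal{C}'\neq\mathcal{C}$ of class $i$ but no neighbor in $\mathcal{C}$, a node $w_{\mathcal{C}}$ and the edge $\{v_{\mathcal{C}},w_{\mathcal{C}}\}$ are added. $\mathcal{H}_i$ is the disjoint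 union of the $\mathcal{H}_i[\mathcal{C}]$; its nodes $v_{\mathcal{C}}$ coming from type-2 nodes are called type-2 and those coming from type-1 nodes type-1, and every edge joins a type-2 and a type-1 node. Matching algorithm: a node of $\mathcal{H}_i$ is active iff none of its incident edges is matched, an edge is active iff both endpoints are active. In each round, every active type-2 node assigns random numbers from a sufficiently large range to its incident active edges, selects the edge with the largest number and sends this choice to its neighbors; every type-1 node that received at least one proposal picks the proposed edge with the largest number and adds it to the matching (informing the proposer); matched nodes and their edges become inactive. V-CONGEST model: in each time slot each real node may send one identical message of $O(\log n)$ bits to all its neighbors in $G$. *)

theory Defs
  imports Main
begin

datatype 'a vnode = Low nat 'a | T1 nat 'a | T2 nat 'a

fun psi :: "'a vnode \<Rightarrow> 'a" where
  "psi (Low j x) = x" | "psi (T1 j x) = x" | "psi (T2 j x) = x"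

fun layer :: "'a vnode \<Rightarrow> nat" where
  "layer (Low j x) = j" | "layer (T1 j x) = j" | "layer (T2 j x) = j"

definition vnodes :: "'a set \<Rightarrow> nat \<Rightarrow> 'a vnode set" where
  "vnodes V L =
     {Low j x | j x. x \<in> V \<and> 1 \<le> j \<and> j \<le> L}
   \<union> {T1 j x | j x. x \<in> V \<and> L < j \<and> j \<le> 2 * L}
   \<union> {T2 j x | j x. x \<in> V \<and> L < j \<and> j \<le> 2 * L}"

definition vadj :: "'a set \<Rightarrow> ('a \<Rightarrow> 'a \<Rightarrow> bool) \<Rightarrow> nat \<Rightarrow> 'a vnode \<Rightarrow> 'a vnode \<Rightarrow> bool" where
  "vadj V E L u w \<longleftrightarrow> u \<in> vnodes V L \<and> w \<in> vnodes V L \<and> u \<noteq> w \<and>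
     (psi u = psi w \<or> E (psi u) (psi w))"

definition old :: "'a set \<Rightarrow> nat \<Rightarrow> nat \<Rightarrow> 'a vnode \<Rightarrow> bool" where
  "old V L l u \<longleftrightarrow> u \<in> vnodes V L \<and> layer u < l"

definition cedges :: "'a set \<Rightarrow> ('a \<Rightarrow> 'a \<Rightarrow> bool) \<Rightarrow> nat \<Rightarrow> nat \<Rightarrow> ('a vnode \<Rightarrow> nat) \<Rightarrow> nat
    \<Rightarrow> ('a vnode \<times> 'a vnode) set" where
  "cedges V E L l cls i = {(u, w). vadj V E L u w \<and> old V L l u \<and> old V L l w \<and>
                                   cls u = i \<and> cls w = i}"

definition comps :: "'a set \<Rightarrow> ('a \<Rightarrow> 'a \<Rightarrow> bool) \<Rightarrow> nat \<Rightarrow> nat \<Rightarrow> ('a vnode \<Rightarrow> nat) \<Rightarrow> nat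
    \<Rightarrow> 'a vnode set set" where
  "comps V E L l cls i =
     {{w. (u, w) \<in> (cedges V E L l cls i)\<^sup>*} | u. old V L l u \<and> cls u = i}"

definition has_nbr_in :: "'a set \<Rightarrow> ('a \<Rightarrow> 'a \<Rightarrow> bool) \<Rightarrow> nat \<Rightarrow> 'a vnode \<Rightarrow> 'a vnode set \<Rightarrow> bool" where
  "has_nbr_in V E L u C \<longleftrightarrow> (\<exists>w\<in>C. vadj V E L u w)"

text \<open>Nodes of the helper graph H_i are pairs (v, C) standing for v_C.\<close>
type_synonym 'a hnode = "'a vnode \<times> 'a vnode set"

definition hnode2 :: "'a set \<Rightarrow> ('a \<Rightarrow> 'a \<Rightarrow> bool) \<Rightarrow> nat \<Rightarrow> nat \<Rightarrow> ('a vnode \<Rightarrow> nat) \<Rightarrow> nat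
    \<Rightarrow> 'a hnode \<Rightarrow> bool" where
  "hnode2 V E L l cls i p \<longleftrightarrow>
     (case p of (v, C) \<Rightarrow>
        C \<in> comps V E L l cls i \<and> (\<exists>x\<in>V. v = T2 l x) \<and> psi v \<notin> psi ` C \<and>
        has_nbr_in V E L v C \<and>
        (\<forall>C'\<in>comps V E L l cls i. C' \<noteq> C \<longrightarrow> \<not> has_nbr_in V E L v C'))"

text \<open>Edges {v_C, w_C} of H_i, oriented as (type-2 endpoint, type-1 endpoint).\<close>
definition hedge :: "'a set \<Rightarrow> ('a \<Rightarrow> 'a \<Rightarrow> bool) \<Rightarrow> nat \<Rightarrow> nat \<Rightarrow> ('a vnode \<Rightarrow> nat) \<Rightarrow> nat
    \<Rightarrow> 'a hnode \<times> 'a hnode \<Rightarrow> bool" where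
  "hedge V E L l cls i e \<longleftrightarrow>
     (case e of ((v, C), (w, C')) \<Rightarrow>
        C' = C \<and> hnode2 V E L l cls i (v, C) \<and> (\<exists>y. w = T1 l y) \<and> vadj V E L v w \<and>
        (\<exists>C''\<in>comps V E L l cls i. C'' \<noteq> C \<and> has_nbr_in V E L w C'') \<and>
        \<not> has_nbr_in V E L w C)"

definition chosen :: "('b \<Rightarrow> bool) \<Rightarrow> ('b \<Rightarrow> nat) \<Rightarrow> 'b" where
  "chosen S r = (SOME e. S e \<and> (\<forall>e'. S e' \<longrightarrow> r e' \<le> r e))"

definition hactive :: "('n \<times> 'n) set \<Rightarrow> 'n \<Rightarrow> bool" where
  "hactive M p \<longleftrightarrow> \<not> (\<exists>e\<in>M. fst e = p \<or> snd e = p)"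

definition active_edge :: "'a set \<Rightarrow> ('a \<Rightarrow> 'a \<Rightarrow> bool) \<Rightarrow> nat \<Rightarrow> nat \<Rightarrow> ('a vnode \<Rightarrow> nat) \<Rightarrow> nat
    \<Rightarrow> ('a hnode \<times> 'a hnode) set \<Rightarrow> 'a hnode \<times> 'a hnode \<Rightarrow> bool" where
  "active_edge V E L l cls i M e \<longleftrightarrow>
     hedge V E L l cls i e \<and> hactive M (fst e) \<and> hactive M (snd e)"

definition proposing :: "'a set \<Rightarrow> ('a \<Rightarrow> 'a \<Rightarrow> bool) \<Rightarrow> nat \<Rightarrow> nat \<Rightarrow> ('a vnode \<Rightarrow> nat) \<Rightarrow> nat
    \<Rightarrow> ('a hnode \<times> 'a hnode) set \<Rightarrow> 'a hnode \<Rightarrow> bool" where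
  "proposing V E L l cls i M p \<longleftrightarrow>
     hnode2 V E L l cls i p \<and> hactive M p \<and> (\<exists>e. active_edge V E L l cls i M e \<and> fst e = p)"

definition proposal :: "'a set \<Rightarrow> ('a \<Rightarrow> 'a \<Rightarrow> bool) \<Rightarrow> nat \<Rightarrow> nat \<Rightarrow> ('a vnode \<Rightarrow> nat) \<Rightarrow> nat
    \<Rightarrow> ('a hnode \<times> 'a hnode) set \<Rightarrow> ('a hnode \<times> 'a hnode \<Rightarrow> nat) \<Rightarrow> 'a hnode \<Rightarrow> 'a hnode \<times> 'a hnode" where
  "proposal V E L l cls i M r p = chosen (\<lambda>e. active_edge V E L l cls i M e \<and> fst e = p) r"

definition received :: "'a set \<Rightarrow> ('a \<Rightarrow> 'a \<Rightarrow> bool) \<Rightarrow> nat \<Rightarrow> nat \<Rightarrow> ('a vnode \<Rightarrow> nat) \<Rightarrow> nat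
    \<Rightarrow> ('a hnode \<times> 'a hnode) set \<Rightarrow> ('a hnode \<times> 'a hnode \<Rightarrow> nat) \<Rightarrow> 'a hnode \<Rightarrow> 'a hnode set" where
  "received V E L l cls i M r q =
     {p. proposing V E L l cls i M p \<and> proposal V E L l cls i M r p = (p, q)}"

definition accepted :: "'a set \<Rightarrow> ('a \<Rightarrow> 'a \<Rightarrow> bool) \<Rightarrow> nat \<Rightarrow> nat \<Rightarrow> ('a vnode \<Rightarrow> nat) \<Rightarrow> nat
    \<Rightarrow> ('a hnode \<times> 'a hnode) set \<Rightarrow> ('a hnode \<times> 'a hnode \<Rightarrow> nat) \<Rightarrow> 'a hnode \<Rightarrow> 'a hnode" where
  "accepted V E L l cls i M r q =
     chosen (\<lambda>p. p \<in> received V E L l cls i M r q) (\<lambda>p. r (p, q))"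

datatype 'n msg = Propose 'n | Accept 'n

text \<open>Transmissions (sender real node, receiver real node, message) over real edges in one
  round, when each real node x simulates all copies x_C of its layer-l virtual nodes.\<close>
definition transmissions :: "'a set \<Rightarrow> ('a \<Rightarrow> 'a \<Rightarrow> bool) \<Rightarrow> nat \<Rightarrow> nat \<Rightarrow> ('a vnode \<Rightarrow> nat) \<Rightarrow> nat
    \<Rightarrow> ('a hnode \<times> 'a hnode) set \<Rightarrow> ('a hnode \<times> 'a hnode \<Rightarrow> nat)
    \<Rightarrow> ('a \<times> 'a \<times> 'a hnode msg) set" where
  "transmissions V E L l cls i M r =
     {(psi (fst p), y, Propose p) | p y. proposing V E L l cls i M p \<and> y \<noteq> psi (fst p) \<and>
         (\<exists>q. hedge V E L l cls i (p, q) \<and> psi (fst q) = y)}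
   \<union> {(psi (fst q), psi (fst (accepted V E L l cls i M r q)), Accept q) | q.
         received V E L l cls i M r q \<noteq> {} \<and>
         psi (fst q) \<noteq> psi (fst (accepted V E L l cls i M r q))}"

end

theory Submission
  imports Defs
begin

text \<open>A type-2 helper node v_C is determined by its host real node: v is the type-2 copy on
  layer l, and C is the unique component of class i that v has a neighbour in. Hence every
  real node sends at most one proposal per round, and it accepts at most one proposal from
  each neighbour, because that neighbour hosts at most one proposer and each proposer proposes
  a single edge. Every message travels along an edge of G, so counting message kinds, a real
  edge carries at most one message of each kind in each direction, and a real node sends to
  at most \<Delta> neighbours per kind.\<close>

lemma chosen_satisfies:
  assumes "finite {e. S e}" and "S e0"
  shows "S (chosen S r)"
proof -
  have "Max (r ` {e. S e}) \<in> r ` {e. S e}"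
    using assms by (intro Max_in) auto
  then obtain e where e: "S e" "r e = Max (r ` {e. S e})" by auto
  then have "\<forall>e'. S e' \<longrightarrow> r e' \<le> r e"
    using assms(1) by (auto intro: Max_ge)
  with e have "\<exists>e. S e \<and> (\<forall>e'. S e' \<longrightarrow> r e' \<le> r e)" by blast
  then show ?thesis
    unfolding chosen_def by (rule someI2_ex) blast
qed

lemma hnode2_host:
  "hnode2 V E L l cls i p \<Longrightarrow> fst p = T2 l (psi (fst p)) \<and> psi (fst p) \<in> V"
  unfolding hnode2_def by (cases p) auto

lemma hnode2_component_unique:
  "hnode2 V E L l cls i (v, C) \<Longrightarrow> hnode2 V E L l cls i (v, C') \<Longrightarrow> C = C'"
  unfolding hnode2_def by auto

lemma hnode2_eqI:
  assumes "hnode2 V E L l cls i p" and "hnode2 V E L l cls i p'"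
    and "psi (fst p) = psi (fst p')"
  shows "p = p'"
proof -
  obtain v C v' C' where p: "p = (v, C)" and p': "p' = (v', C')"
    by (cases p, cases p')
  have "v = v'"
    using hnode2_host[OF assms(1)] hnode2_host[OF assms(2)] assms(3) p p' by simp
  then show ?thesis
    using assms(1,2) hnode2_component_unique unfolding p p' by blast
qed

lemma finite_hnode2:
  assumes "finite V"
  shows "finite {p. hnode2 V E L l cls i p}"
proof (rule finite_imageD)
  show "inj_on fst {p. hnode2 V E L l cls i p}"
    by (rule inj_onI) (metis hnode2_eqI mem_Collect_eq)
  have "fst ` {p. hnode2 V E L l cls i p} \<subseteq> T2 l ` V"
    using hnode2_host by blast
  then show "finite (fst ` {p. hnode2 V E L l cls i p})"
    using assms finite_subset by blast
qed

lemma accepted_in_received: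
  assumes "finite V" and "received V E L l cls i M r q \<noteq> {}"
  shows "accepted V E L l cls i M r q \<in> received V E L l cls i M r q"
proof -
  have "received V E L l cls i M r q \<subseteq> {p. hnode2 V E L l cls i p}"
    unfolding received_def proposing_def by auto
  then have "finite (received V E L l cls i M r q)"
    using finite_hnode2[OF assms(1)] by (rule finite_subset)
  with assms(2) show ?thesis
    unfolding accepted_def by (auto intro: chosen_satisfies)
qed

lemma hedge_proposal:
  assumes "finite V" and "proposing V E L l cls i M p"
  shows "hedge V E L l cls i (proposal V E L l cls i M r p)"
proof -
  let ?S = "\<lambda>e. active_edge V E L l cls i M e \<and> fst e = p"
  have "{e. ?S e} \<subseteq> (\<lambda>y. (p, (T1 l y, snd p))) ` V"
  proof
    fix e assume "e \<in> {e. ?S e}"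
    then have h: "hedge V E L l cls i e" and "fst e = p"
      unfolding active_edge_def by auto
    obtain v C w C' where e: "e = ((v, C), (w, C'))" by (metis prod.collapse)
    from h obtain y where "C' = C" "w = T1 l y" "vadj V E L v w"
      unfolding e hedge_def by auto
    moreover from this have "y \<in> V"
      unfolding vadj_def vnodes_def by auto
    ultimately show "e \<in> (\<lambda>y. (p, (T1 l y, snd p))) ` V"
      using \<open>fst e = p\<close> e by force
  qed
  then have "finite {e. ?S e}"
    using assms(1) finite_subset by blast
  moreover obtain e0 where "?S e0"
    using assms(2) unfolding proposing_def by auto
  ultimately have "?S (proposal V E L l cls i M r p)"
    unfolding proposal_def by (rule chosen_satisfies)
  then show ?thesis unfolding active_edge_def by blast
qed

lemma hedge_vadj: "hedge V E L l cls i (p, q) \<Longrightarrow> vadj V E L (fst p) (fst q)"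
  unfolding hedge_def by (cases p, cases q) simp

lemma Propose_transmission_iff:
  "(x, y, Propose p) \<in> transmissions V E L l cls i M r \<longleftrightarrow>
     proposing V E L l cls i M p \<and> x = psi (fst p) \<and> y \<noteq> x \<and>
     (\<exists>q. hedge V E L l cls i (p, q) \<and> psi (fst q) = y)"
  unfolding transmissions_def by blast

lemma Accept_transmission_iff:
  "(x, y, Accept q) \<in> transmissions V E L l cls i M r \<longleftrightarrow>
     received V E L l cls i M r q \<noteq> {} \<and> x = psi (fst q) \<and>
     y = psi (fst (accepted V E L l cls i M r q)) \<and> x \<noteq> y"
  unfolding transmissions_def by blast

lemma Accept_transmissionD:
  assumes "finite V" and "(x, y, Accept q) \<in> transmissions V E L l cls i M r"
  defines "p \<equiv> accepted V E L l cls i M r q"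
  shows "proposing V E L l cls i M p" and "proposal V E L l cls i M r p = (p, q)"
    and "x = psi (fst q)" and "y = psi (fst p)" and "x \<noteq> y"
proof -
  from assms(2) have "received V E L l cls i M r q \<noteq> {}"
    unfolding Accept_transmission_iff by blast
  from accepted_in_received[OF assms(1) this]
  show "proposing V E L l cls i M p" and "proposal V E L l cls i M r p = (p, q)"
    unfolding p_def received_def by blast+
  from assms(2) show "x = psi (fst q)" and "y = psi (fst p)" and "x \<noteq> y"
    unfolding p_def Accept_transmission_iff by blast+
qed

fun is_proposal :: "'n msg \<Rightarrow> bool" where
  "is_proposal (Propose p) = True"
| "is_proposal (Accept q) = False"

lemma transmission_eq_if_same_kind:
  assumes "finite V"
    and "(x, y, m) \<in> transmissions V E L l cls i M r"
    and "(x, y, m') \<in> transmissions V E L l cls i M r"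
    and "is_proposal m = is_proposal m'"
  shows "m = m'"
proof (cases m; cases m')
  fix p p' assume m: "m = Propose p" and m': "m' = Propose p'"
  from assms(2) have p: "proposing V E L l cls i M p" "x = psi (fst p)"
    unfolding m Propose_transmission_iff by blast+
  from assms(3) have p': "proposing V E L l cls i M p'" "x = psi (fst p')"
    unfolding m' Propose_transmission_iff by blast+
  have "p = p'"
  proof (rule hnode2_eqI)
    show "hnode2 V E L l cls i p" and "hnode2 V E L l cls i p'"
      using p(1) p'(1) unfolding proposing_def by blast+
    show "psi (fst p) = psi (fst p')"
      using p(2) p'(2) by simp
  qed
  then show "m = m'" unfolding m m' by simp
next
  fix q q' assume m: "m = Accept q" and m': "m' = Accept q'"
  note a = Accept_transmissionD[OF assms(1) assms(2)[unfolded m]]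
  note a' = Accept_transmissionD[OF assms(1) assms(3)[unfolded m']]
  have "accepted V E L l cls i M r q = accepted V E L l cls i M r q'"
  proof (rule hnode2_eqI)
    show "hnode2 V E L l cls i (accepted V E L l cls i M r q)"
      and "hnode2 V E L l cls i (accepted V E L l cls i M r q')"
      using a(1) a'(1) unfolding proposing_def by blast+
    show "psi (fst (accepted V E L l cls i M r q)) = psi (fst (accepted V E L l cls i M r q'))"
      using a(4) a'(4) by simp
  qed
  then have "q = q'" using a(2) a'(2) by (metis prod.inject)
  then show "m = m'" unfolding m m' by simp
next
  fix p q' assume "m = Propose p" and "m' = Accept q'"
  with assms(4) show "m = m'" by simp
next
  fix q p' assume "m = Accept q" and "m' = Propose p'"
  with assms(4) show "m = m'" by simp
qed

lemma transmission_along_edge: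
  assumes "finite V" and "\<And>x y. E x y \<Longrightarrow> E y x"
    and "(x, y, m) \<in> transmissions V E L l cls i M r"
  shows "E x y"
proof (cases m)
  case (Propose p)
  from assms(3)[unfolded Propose] obtain q where "x = psi (fst p)" "y \<noteq> x" "psi (fst q) = y"
    and "hedge V E L l cls i (p, q)"
    unfolding Propose_transmission_iff by blast
  then show ?thesis using hedge_vadj unfolding vadj_def by fastforce
next
  case (Accept q)
  note a = Accept_transmissionD[OF assms(1) assms(3)[unfolded Accept]]
  have "hedge V E L l cls i (accepted V E L l cls i M r q, q)"
    using hedge_proposal[OF assms(1) a(1), of r] a(2) by simp
  then have "E y x"
    using a(3-5) hedge_vadj unfolding vadj_def by fastforce
  then show ?thesis using assms(2) by blast
qed

theorem lemma9:
  fixes V :: "'a set" and E :: "'a \<Rightarrow> 'a \<Rightarrow> bool" and L l t i \<Delta> :: nat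
    and cls :: "'a vnode \<Rightarrow> nat"
    and M :: "('a hnode \<times> 'a hnode) set" and r :: "'a hnode \<times> 'a hnode \<Rightarrow> nat"
  assumes "finite V"
    and "\<And>x y. E x y \<Longrightarrow> x \<in> V \<and> y \<in> V"
    and "\<And>x y. E x y \<Longrightarrow> E y x"
    and "\<And>x. \<not> E x x"
    and "\<And>x. x \<in> V \<Longrightarrow> card {y. E x y} \<le> \<Delta>"
    and "L < l" and "l \<le> 2 * L"
    and "\<And>u. old V L l u \<Longrightarrow> cls u \<in> {1..t}"
    and "i \<in> {1..t}"
    and "M \<subseteq> Collect (hedge V E L l cls i)"
    and "\<And>e e'. e \<in> M \<Longrightarrow> e' \<in> M \<Longrightarrow> e \<noteq> e' \<Longrightarrow> fst e \<noteq> fst e' \<and> snd e \<noteq> snd e'"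
  shows "(\<forall>x y. finite {m. (x, y, m) \<in> transmissions V E L l cls i M r}
                \<and> card {m. (x, y, m) \<in> transmissions V E L l cls i M r} \<le> 2)
       \<and> (\<forall>x. finite {(y, m). (x, y, m) \<in> transmissions V E L l cls i M r}
                \<and> card {(y, m). (x, y, m) \<in> transmissions V E L l cls i M r} \<le> 2 * \<Delta>)"
proof (intro conjI allI)
  let ?T = "transmissions V E L l cls i M r"
  fix x y
  have inj: "inj_on is_proposal {m. (x, y, m) \<in> ?T}"
    by (rule inj_onI) (metis transmission_eq_if_same_kind[OF assms(1)] mem_Collect_eq)
  then show "finite {m. (x, y, m) \<in> ?T}"
    by (rule finite_imageD[OF finite_subset[OF subset_UNIV finite_UNIV]])
  show "card {m. (x, y, m) \<in> ?T} \<le> 2"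
    using card_inj_on_le[OF inj subset_UNIV finite_UNIV] by (simp add: card_UNIV_bool)
next
  let ?T = "transmissions V E L l cls i M r"
  fix x
  let ?N = "{y. E x y}"
  have "finite ?N"
    using assms(1,2) finite_subset[of ?N V] by blast
  have "card ?N \<le> \<Delta>"
  proof (cases "x \<in> V")
    case False
    then have "?N = {}" using assms(2) by blast
    then show ?thesis by simp
  qed (rule assms(5))
  let ?kind = "\<lambda>(y, m). (y, is_proposal m)"
  have inj: "inj_on ?kind {(y, m). (x, y, m) \<in> ?T}"
    by (rule inj_onI) (clarsimp, metis transmission_eq_if_same_kind[OF assms(1)])
  have img: "?kind ` {(y, m). (x, y, m) \<in> ?T} \<subseteq> ?N \<times> UNIV"
    using transmission_along_edge[OF assms(1,3)] by auto
  have fin: "finite (?N \<times> (UNIV :: bool set))"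
    using \<open>finite ?N\<close> by simp
  show "finite {(y, m). (x, y, m) \<in> ?T}"
    using finite_imageD[OF finite_subset[OF img fin] inj] .
  have "card {(y, m). (x, y, m) \<in> ?T} \<le> card ?N * 2"
    using card_inj_on_le[OF inj img fin] by (simp add: card_cartesian_product card_UNIV_bool)
  with \<open>card ?N \<le> \<Delta>\<close> show "card {(y, m). (x, y, m) \<in> ?T} \<le> 2 * \<Delta>" by linarith
qed

end
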